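(* Let $\{p_\alpha\}$ be a one-parameter exponential family on $\mathbb{R}$ with canonical parameter $\alpha$, sufficient statistic $x$, base measure $p_0$, i.e. $\frac{dp_\alpha}{dp_0}(x)=\exp(\alpha x-\Phi(\alpha))$ with $\Phi(0)=0$, where $\Phi$ is smooth and finite on $\mathbb{R}$ and $\Phi''(0)\neq 0$. Consider the model in which, given $X\in\mathbb{R}_{>0}^{m\times n}$ and $u\in\mathbb{R}^m$, $v\in\mathbb{R}^n$, independently $Y_{ij}\sim p_{\alpha_{ij}}$ with $\alpha_{ij}=u_i+\log X_{ij}-v_j$, with log-likelihood $L(u,v;Y)=\sum_iu_ip_i-\sum_jv_jq_j-\sum_{ij}\Phi(u_i+w_{ij})+C(Y)$ where $p_i=\sum_jY_{ij}$, $q_j=\sum_iY_{ij}$, $w_{ij}=\log X_{ij}-v_j$. Suppose the MLE satisfies a generalized proportional fitting equation for all parameters, in the sense that there are smooth functions $f,h:\mathbb{R}\to\mathbb{R}$ with $$h(u_i)\sum_j f(w_{ij})=\sum_j\Phi'(u_i+w_{ij})\quad\text{for all } u_i\in\mathbb{R}\text{ and all } (w_{ij})_j\in\mathbb{R}^n$$ (equivalently, $\partial_{u_i}L=0$ iff $h(u_i)=p_i/\sum_jf(w_{ij})$). Then there exist constants $a,b\in\mathbb{R}$ with $\Phi(\alpha)=e^{a\alpha+b}-e^b$ for all $\alpha$; i.e. $p_\alpha$ is the law of $aZ$ with $Z\sim\mathrm{Poisson}(e^{a\alpha+b})$ (a scaled Poisson family). Conversely, scaled Poisson families satisfy such an equation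 (with $f=h=\exp$ in the unscaled case, recovering the IPF equations). *)

theory Defs
  imports "HOL-Probability.Probability"
begin

definition smooth_real :: "(real \<Rightarrow> real) \<Rightarrow> bool" where
  "smooth_real g \<longleftrightarrow> (\<forall>k x. ((deriv ^^ k) g) differentiable (at x))"

end

theory Submission
  imports Defs
begin

text \<open>Taking all \<open>w j\<close> equal to \<open>t\<close> turns the separability condition into
\<open>h u * f t = \<Phi>' (u + t)\<close>, so \<open>g = \<Phi>'\<close> satisfies the multiplicative Cauchy equation
\<open>g (u + t) * g 0 = g u * g t\<close>, whose differentiable solutions are \<open>g x = c * exp (k * x)\<close>.
Since \<open>\<Phi>'' 0 = c * k \<noteq> 0\<close> and \<open>\<Phi> 0 = 0\<close>, integration gives \<open>\<Phi> \<alpha> = c / k * (exp (k * \<alpha>) - 1)\<close>,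
and \<open>c / k > 0\<close> because \<open>\<Phi> 1 + \<Phi> (-1) = ln (E[exp X] * E[exp (-X)]) \<ge> 0\<close>.
Conversely, for \<open>\<Phi> \<alpha> = exp (a * \<alpha> + b) - exp b\<close> the derivative
\<open>\<Phi>' (u + w) = a * exp (a * u + b) * exp (a * w)\<close> separates.\<close>

lemma deriv_iterate_scaled_exp:
  "(deriv ^^ k) (\<lambda>x. c * exp (a * x + d)) = (\<lambda>x. c * a ^ k * exp (a * x + d :: real))"
proof (induction k)
  case 0
  then show ?case by simp
next
  case (Suc k)
  have "deriv (\<lambda>x. c * a ^ k * exp (a * x + d)) x = c * a ^ Suc k * exp (a * x + d)" for x
    by (rule DERIV_imp_deriv) (auto intro!: derivative_eq_intros)
  then show ?case using Suc by auto
qed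

lemma smooth_real_scaled_exp: "smooth_real (\<lambda>x. c * exp (a * x + d))"
  unfolding smooth_real_def deriv_iterate_scaled_exp real_differentiable_def
  by (auto intro!: derivative_eq_intros)

lemma separable_of_separable_sum:
  fixes g f h :: "real \<Rightarrow> real"
  assumes "n \<ge> 1"
    and "\<And>u (w :: nat \<Rightarrow> real). h u * (\<Sum>j<n. f (w j)) = (\<Sum>j<n. g (u + w j))"
  shows "h u * f t = g (u + t)"
proof -
  have "real n * (h u * f t) = real n * g (u + t)"
    using assms(2)[of u "\<lambda>_. t"] by (simp add: algebra_simps)
  then show ?thesis using assms(1) by simp
qed

lemma multiplicative_cauchy_imp_scaled_exp:
  fixes g :: "real \<Rightarrow> real"
  assumes diff: "\<And>x. g differentiable (at x)"
    and cauchy: "\<And>u t. g (u + t) * g 0 = g u * g t"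
  obtains c k where "\<And>x. g x = c * exp (k * x)"
proof (cases "g 0 = 0")
  case True
  then have "g x = 0 * exp (0 * x)" for x
    using cauchy[of x x] by simp
  then show ?thesis by (rule that)
next
  case False
  define k where "k = deriv g 0 / g 0"
  have dg: "(g has_real_derivative deriv g x) (at x)" for x
    using diff by (simp add: DERIV_deriv_iff_real_differentiable)
  have ode: "deriv g u = k * g u" for u
  proof -
    have "((\<lambda>t. g (u + t) * g 0) has_real_derivative deriv g u * g 0) (at 0)"
      using dg[of u] by (auto intro!: derivative_eq_intros DERIV_chain2[of g])
    moreover have "((\<lambda>t. g u * g t) has_real_derivative g u * deriv g 0) (at 0)"
      using dg[of 0] by (auto intro!: derivative_eq_intros)
    ultimately have "deriv g u * g 0 = g u * deriv g 0"
      unfolding cauchy by (rule DERIV_unique)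
    then show ?thesis using False by (simp add: k_def field_simps)
  qed
  have "\<forall>x. ((\<lambda>x. g x * exp (- k * x)) has_real_derivative 0) (at x)"
    using dg by (auto intro!: derivative_eq_intros simp: ode algebra_simps)
  then have const: "g x * exp (- k * x) = g 0 * exp (- k * 0)" for x
    by (rule DERIV_isconst_all)
  have "g x = g 0 * exp (k * x)" for x
  proof -
    have "g x = (g x * exp (- k * x)) * exp (k * x)"
      by (simp flip: exp_add)
    also have "g x * exp (- k * x) = g 0"
      using const[of x] by simp
    finally show ?thesis .
  qed
  then show ?thesis by (rule that)
qed

lemma antiderivative_scaled_exp:
  fixes F :: "real \<Rightarrow> real"
  assumes "\<And>x. (F has_real_derivative c * exp (k * x)) (at x)" and "k \<noteq> 0"
  shows "F x = F 0 + c / k * (exp (k * x) - 1)"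
proof -
  have "\<forall>x. ((\<lambda>x. F x - c / k * exp (k * x)) has_real_derivative 0) (at x)"
    using assms by (auto intro!: derivative_eq_intros)
  then have "F x - c / k * exp (k * x) = F 0 - c / k * exp (k * 0)"
    by (rule DERIV_isconst_all)
  then show ?thesis by (simp add: algebra_simps)
qed

lemma separable_derivative_imp_scaled_exp:
  fixes \<Phi> f h :: "real \<Rightarrow> real"
  assumes "n \<ge> 1"
    and sep: "\<And>u (w :: nat \<Rightarrow> real). h u * (\<Sum>j<n. f (w j)) = (\<Sum>j<n. deriv \<Phi> (u + w j))"
    and diff1: "\<And>x. \<Phi> differentiable (at x)"
    and diff2: "\<And>x. deriv \<Phi> differentiable (at x)"
    and curved: "deriv (deriv \<Phi>) 0 \<noteq> 0"
  obtains A k where "A \<noteq> 0" "k \<noteq> 0" "\<And>x. \<Phi> x = \<Phi> 0 + A * (exp (k * x) - 1)"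
proof -
  have "h u * f t = deriv \<Phi> (u + t)" for u t
    using assms(1) sep by (rule separable_of_separable_sum)
  then have "deriv \<Phi> (u + t) * deriv \<Phi> 0 = deriv \<Phi> u * deriv \<Phi> t" for u t
    by (metis add_0 add.right_neutral mult.commute mult.left_commute)
  then obtain c k where g: "\<And>x. deriv \<Phi> x = c * exp (k * x)"
    using multiplicative_cauchy_imp_scaled_exp diff2 by blast
  have "deriv (deriv \<Phi>) 0 = c * k"
    using deriv_iterate_scaled_exp[of 1 c k 0] by (simp add: g[abs_def])
  then have "c \<noteq> 0" "k \<noteq> 0" using curved by auto
  moreover have "(\<Phi> has_real_derivative c * exp (k * x)) (at x)" for x
    by (metis g diff1 DERIV_deriv_iff_real_differentiable)
  ultimately show ?thesis
    using that[of "c / k" k] antiderivative_scaled_exp by auto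
qed

lemma quadratic_bound_imp_mult_ge_1:
  fixes A B :: real
  assumes "\<And>t. 2 * t \<le> B + t\<^sup>2 * A" and "A \<ge> 0"
  shows "A * B \<ge> 1"
proof (cases "A = 0")
  case True
  then show ?thesis using assms(1)[of "\<bar>B\<bar> + 1"] by auto
next
  case False
  then have "A > 0" using assms(2) by auto
  have "2 * (1 / A) \<le> B + (1 / A)\<^sup>2 * A" by (rule assms(1))
  then show ?thesis using \<open>A > 0\<close> by (simp add: power2_eq_square field_simps)
qed

lemma (in prob_space) expectation_exp_mult_exp_minus_ge_1:
  fixes X :: "'a \<Rightarrow> real"
  assumes "integrable M (\<lambda>x. exp (X x))" and "integrable M (\<lambda>x. exp (- X x))"
  shows "(\<integral>x. exp (X x) \<partial>M) * (\<integral>x. exp (- X x) \<partial>M) \<ge> 1"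
proof (rule quadratic_bound_imp_mult_ge_1)
  fix t :: real
  have "(\<integral>x. 2 * t \<partial>M) \<le> (\<integral>x. exp (- X x) + t\<^sup>2 * exp (X x) \<partial>M)"
  proof (rule integral_mono)
    fix x
    have "0 \<le> (1 - t * exp (X x))\<^sup>2 / exp (X x)" by simp
    also have "\<dots> = exp (- X x) + t\<^sup>2 * exp (X x) - 2 * t"
      by (simp add: power2_eq_square field_simps exp_minus)
    finally show "2 * t \<le> exp (- X x) + t\<^sup>2 * exp (X x)" by simp
  qed (use assms in auto)
  also have "\<dots> = (\<integral>x. exp (- X x) \<partial>M) + t\<^sup>2 * (\<integral>x. exp (X x) \<partial>M)"
    using assms by simp
  finally show "2 * t \<le> (\<integral>x. exp (- X x) \<partial>M) + t\<^sup>2 * (\<integral>x. exp (X x) \<partial>M)"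
    by (simp add: prob_space)
qed (rule integral_nonneg_AE, simp)

lemma (in prob_space) ln_expectation_exp_add_ln_expectation_exp_minus_nonneg:
  fixes X :: "'a \<Rightarrow> real"
  assumes "integrable M (\<lambda>x. exp (X x))" and "integrable M (\<lambda>x. exp (- X x))"
  shows "0 \<le> ln (\<integral>x. exp (X x) \<partial>M) + ln (\<integral>x. exp (- X x) \<partial>M)"
proof -
  have "0 \<le> (\<integral>x. exp (X x) \<partial>M)" "0 \<le> (\<integral>x. exp (- X x) \<partial>M)"
    by (auto intro!: integral_nonneg_AE)
  then show ?thesis
    using expectation_exp_mult_exp_minus_ge_1[OF assms]
    by (smt (verit) ln_mult ln_ge_zero mult_not_zero)
qed

theorem mainTheorem3:
  fixes p0 :: "real measure" and \<Phi> :: "real \<Rightarrow> real" and n :: nat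
  assumes "prob_space p0"
    and "sets p0 = sets borel"
    and "\<And>\<alpha>. integrable p0 (\<lambda>x. exp (\<alpha> * x))"
    and "\<And>\<alpha>. \<Phi> \<alpha> = ln (\<integral>x. exp (\<alpha> * x) \<partial>p0)"
    and "smooth_real \<Phi>"
    and "(deriv ^^ 2) \<Phi> 0 \<noteq> 0"
    and "n \<ge> 1"
  shows "(\<exists>f h. smooth_real f \<and> smooth_real h \<and>
            (\<forall>u (w :: nat \<Rightarrow> real). h u * (\<Sum>j<n. f (w j)) = (\<Sum>j<n. deriv \<Phi> (u + w j))))
         \<longleftrightarrow> (\<exists>a b. \<forall>\<alpha>. \<Phi> \<alpha> = exp (a * \<alpha> + b) - exp b)"
proof
  assume "\<exists>f h. smooth_real f \<and> smooth_real h \<and>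
            (\<forall>u (w :: nat \<Rightarrow> real). h u * (\<Sum>j<n. f (w j)) = (\<Sum>j<n. deriv \<Phi> (u + w j)))"
  then obtain f h where
    sep: "\<And>u (w :: nat \<Rightarrow> real). h u * (\<Sum>j<n. f (w j)) = (\<Sum>j<n. deriv \<Phi> (u + w j))"
    by blast
  have "\<Phi> differentiable (at x)" "deriv \<Phi> differentiable (at x)" for x
    using assms(5) unfolding smooth_real_def by (metis funpow_0 id_apply funpow_Suc_right comp_apply)+
  moreover have "deriv (deriv \<Phi>) 0 \<noteq> 0"
    using assms(6) by (simp add: numeral_2_eq_2)
  ultimately obtain A k where "A \<noteq> 0" "k \<noteq> 0" and \<Phi>: "\<And>x. \<Phi> x = \<Phi> 0 + A * (exp (k * x) - 1)"
    using separable_derivative_imp_scaled_exp[OF assms(7) sep] by blast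
  interpret prob_space p0 by fact
  have \<Phi>0: "\<Phi> 0 = 0"
    using assms(4)[of 0] by (simp add: prob_space)
  have "0 \<le> \<Phi> 1 + \<Phi> (-1)"
    using ln_expectation_exp_add_ln_expectation_exp_minus_nonneg[of "\<lambda>x. x"] assms(3)[of 1] assms(3)[of "-1"]
    by (simp add: assms(4))
  also have "\<dots> = A * (exp k + exp (- k) - 2)"
    using \<Phi>[of 1] \<Phi>[of "-1"] \<Phi>0 by (simp add: algebra_simps)
  finally have "0 \<le> A * (exp k + exp (- k) - 2)" .
  moreover have "exp k + exp (- k) > 2"
    using cosh_real_ge_1[of k] cosh_real_one_iff[of k] \<open>k \<noteq> 0\<close> by (simp add: cosh_def)
  ultimately have "A > 0"
    using \<open>A \<noteq> 0\<close> by (simp add: zero_le_mult_iff)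
  then have "\<Phi> \<alpha> = exp (k * \<alpha> + ln A) - exp (ln A)" for \<alpha>
    using \<Phi>[of \<alpha>] \<Phi>0 by (simp add: exp_add algebra_simps del: mult_exp_exp)
  then show "\<exists>a b. \<forall>\<alpha>. \<Phi> \<alpha> = exp (a * \<alpha> + b) - exp b" by blast
next
  assume "\<exists>a b. \<forall>\<alpha>. \<Phi> \<alpha> = exp (a * \<alpha> + b) - exp b"
  then obtain a b where \<Phi>: "\<Phi> = (\<lambda>\<alpha>. exp (a * \<alpha> + b) - exp b)" by blast
  have "deriv \<Phi> (u + t) = a * exp (a * u + b) * (1 * exp (a * t + 0))" for u t
    unfolding \<Phi> by (rule DERIV_imp_deriv)
      (auto intro!: derivative_eq_intros simp: exp_add[symmetric] algebra_simps)
  then have "a * exp (a * u + b) * (\<Sum>j<n. 1 * exp (a * w j + 0)) = (\<Sum>j<n. deriv \<Phi> (u + w j))"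
    for u and w :: "nat \<Rightarrow> real"
    by (simp add: sum_distrib_left)
  then show "\<exists>f h. smooth_real f \<and> smooth_real h \<and>
            (\<forall>u (w :: nat \<Rightarrow> real). h u * (\<Sum>j<n. f (w j)) = (\<Sum>j<n. deriv \<Phi> (u + w j)))"
    using smooth_real_scaled_exp by blast
qed

end
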